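(* Let $I\subseteq\mathbb{R}$ be an interval, $a,b\in I$ with $a<b$, assume $h(\frac12)>0$, and let $f:I\to\mathbb{R}$ be $h$-convex on $I$ and integrable on $[a,b]$. Then $$\frac{1}{b-a}\int_a^b f(x)\,dx-\frac{1}{2h(\frac12)}f\Big(\frac{a+b}{2}\Big)\ \ge\ \left|\frac{1}{b-a}\int_a^b\Big|\frac{f(x)+f(a+b-x)}{2}\Big|\,dx-\frac{1}{2h(\frac12)}\Big|f\Big(\frac{a+b}{2}\Big)\Big|\right|\ \ge 0.$$
   Context: Let $J$ be an interval with $(0,1)\subseteq J$ and $h:J\to\mathbb{R}$ a non-negative function, not identically zero. A non-negative function $g$ defined on an interval $K$ is called $h$-convex on $K$ if for all $x,y\in K$ and all $t\in(0,1)$: $g(tx+(1-t)y)\le h(t)g(x)+h(1-t)g(y)$. *)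

theory Defs
  imports "HOL-Analysis.Analysis"
begin

definition h_convex :: "(real \<Rightarrow> real) \<Rightarrow> real set \<Rightarrow> (real \<Rightarrow> real) \<Rightarrow> bool" where
  "h_convex h K g \<longleftrightarrow>
     (\<forall>x\<in>K. g x \<ge> 0) \<and>
     (\<forall>x\<in>K. \<forall>y\<in>K. \<forall>t\<in>{0<..<1}.
        g (t * x + (1 - t) * y) \<le> h t * g x + h (1 - t) * g y)"

end

theory Submission
  imports Defs
begin

text \<open>An h-convex function is non-negative, so the absolute values are inert, and since the
  symmetrisation (f x + f (a + b - x)) / 2 has the same integral as f, the middle term equals the
  left-hand side. Both inequalities thus reduce to the left Hermite--Hadamard inequality
  f ((a + b) / 2) (b - a) \<le> 2 h(1/2) \<integral>{a..b} f, obtained by integrating the midpoint instance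
  f ((a + b) / 2) \<le> h(1/2) (f x + f (a + b - x)) of h-convexity.\<close>

lemma has_integral_reflect_midpoint:
  fixes f :: "real \<Rightarrow> 'a::real_normed_vector"
  assumes "(f has_integral i) {a..b}"
  shows "((\<lambda>x. f (a + b - x)) has_integral i) {a..b}"
proof -
  have "((f \<circ> (+) (a + b)) has_integral i) {-b..-a}"
    using assms by (simp add: has_integral_shift_Icc_real)
  then have "((\<lambda>x. (f \<circ> (+) (a + b)) (- x)) has_integral i) {a..b}"
    using has_integral_reflect_real[where f="f \<circ> (+) (a + b)" and a="-b" and b="-a"] by simp
  then show ?thesis by simp
qed

lemma h_convex_nonneg: "h_convex h I f \<Longrightarrow> x \<in> I \<Longrightarrow> 0 \<le> f x"
  unfolding h_convex_def by blast

lemma h_convex_midpoint: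
  assumes "h_convex h I f" "x \<in> I" "y \<in> I"
  shows "f ((x + y) / 2) \<le> h (1/2) * (f x + f y)"
proof -
  have "\<forall>t\<in>{0<..<1}. f (t * x + (1 - t) * y) \<le> h t * f x + h (1 - t) * f y"
    using assms unfolding h_convex_def by blast
  then have "f ((1/2) * x + (1 - 1/2) * y) \<le> h (1/2) * f x + h (1 - 1/2) * f y"
    by (rule bspec) simp
  moreover have "(1/2) * x + (1 - 1/2) * y = (x + y) / 2" "1 - 1/2 = (1/2 :: real)"
    by simp_all
  ultimately show ?thesis
    by (simp only: distrib_left)
qed

lemma h_convex_hermite_hadamard_left:
  assumes "h_convex h I f" "is_interval I" "a \<in> I" "b \<in> I" "a \<le> b"
    and "(f has_integral F) {a..b}"
  shows "f ((a + b) / 2) * (b - a) \<le> 2 * h (1/2) * F"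
proof -
  have sub: "{a..b} \<subseteq> I"
    using mem_is_interval_1_I[OF assms(2-4)] by auto
  have "((\<lambda>x. f ((a + b) / 2)) has_integral f ((a + b) / 2) * (b - a)) {a..b}"
    using has_integral_const_real[of "f ((a + b) / 2)" a b] assms(5) by (simp add: mult.commute)
  moreover have "((\<lambda>x. h (1/2) * (f x + f (a + b - x))) has_integral h (1/2) * (F + F)) {a..b}"
    using assms(6) by (intro has_integral_mult_right has_integral_add has_integral_reflect_midpoint)
  moreover have "f ((a + b) / 2) \<le> h (1/2) * (f x + f (a + b - x))" if "x \<in> {a..b}" for x
    using h_convex_midpoint[OF assms(1), of x "a + b - x"] that sub by (auto simp: subset_iff)
  ultimately have "f ((a + b) / 2) * (b - a) \<le> h (1/2) * (F + F)"
    by (rule has_integral_le)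
  then show ?thesis by simp
qed

lemma integral_abs_symmetrisation:
  assumes "h_convex h I f" "is_interval I" "a \<in> I" "b \<in> I"
    and "(f has_integral F) {a..b}"
  shows "integral {a..b} (\<lambda>x. \<bar>(f x + f (a + b - x)) / 2\<bar>) = F"
proof -
  have sub: "{a..b} \<subseteq> I"
    using mem_is_interval_1_I[OF assms(2-4)] by auto
  have "\<bar>(f x + f (a + b - x)) / 2\<bar> = (f x + f (a + b - x)) / 2" if "x \<in> {a..b}" for x
  proof -
    have "x \<in> I" "a + b - x \<in> I"
      using that sub by (auto simp: subset_iff)
    then show ?thesis
      using h_convex_nonneg[OF assms(1)] by simp
  qed
  then have "integral {a..b} (\<lambda>x. \<bar>(f x + f (a + b - x)) / 2\<bar>)
      = integral {a..b} (\<lambda>x. (f x + f (a + b - x)) / 2)"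
    by (rule integral_cong)
  also have "\<dots> = (F + F) / 2"
    using assms(5)
    by (intro integral_unique has_integral_divide has_integral_add has_integral_reflect_midpoint)
  finally show ?thesis
    by simp
qed

theorem theorem15:
  fixes h f :: "real \<Rightarrow> real" and J I :: "real set" and a b :: real
  assumes J_int: "is_interval J" and J_sub: "{0<..<1} \<subseteq> J"
    and h_nonneg: "\<forall>t\<in>J. h t \<ge> 0" and h_nonzero: "\<exists>t\<in>J. h t \<noteq> 0"
    and I_int: "is_interval I" and a_in: "a \<in> I" and b_in: "b \<in> I" and ab: "a < b"
    and h_half: "h (1/2) > 0"
    and f_hconv: "h_convex h I f"
    and f_int: "f integrable_on {a..b}"
  shows "(1 / (b - a)) * integral {a..b} f - (1 / (2 * h (1/2))) * f ((a + b) / 2)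
           \<ge> \<bar>(1 / (b - a)) * integral {a..b} (\<lambda>x. \<bar>(f x + f (a + b - x)) / 2\<bar>)
              - (1 / (2 * h (1/2))) * \<bar>f ((a + b) / 2)\<bar>\<bar>
         \<and> \<bar>(1 / (b - a)) * integral {a..b} (\<lambda>x. \<bar>(f x + f (a + b - x)) / 2\<bar>)
              - (1 / (2 * h (1/2))) * \<bar>f ((a + b) / 2)\<bar>\<bar> \<ge> 0"
proof -
  define F where "F = integral {a..b} f"
  define m where "m = f ((a + b) / 2)"
  have fF: "(f has_integral F) {a..b}"
    using f_int by (simp add: F_def has_integral_integral)
  have "m * (b - a) \<le> 2 * h (1/2) * F"
    unfolding m_def using h_convex_hermite_hadamard_left[OF f_hconv I_int a_in b_in _ fF] ab by simp
  then have gap: "0 \<le> (1 / (b - a)) * F - (1 / (2 * h (1/2))) * m"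
    using h_half ab by (simp add: field_simps)
  have "\<bar>m\<bar> = m"
    unfolding m_def using ab
    by (intro abs_of_nonneg h_convex_nonneg[OF f_hconv] mem_is_interval_1_I[OF I_int a_in b_in]) auto
  with gap show ?thesis
    unfolding integral_abs_symmetrisation[OF f_hconv I_int a_in b_in fF]
    by (simp only: F_def[symmetric] m_def[symmetric]) simp
qed

end
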